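(* Let $K$ be an algebraically closed field and let $m,m_1,m_2,r\ge0$ be integers with $r$ even and $m=m_1+m_2$. For each $k$, let $X_k$ denote the variety of skew-symmetric $k\times k$ matrices over $K$ of rank at most $r$. Then the map $X_m\to X_{m_1}\times X_{m_2}$ sending a matrix to its pair of diagonal blocks (the upper-left $m_1\times m_1$ block and the lower-right $m_2\times m_2$ block) is surjective. *)

theory Defs
  imports "HOL-Computational_Algebra.Polynomial" "Jordan_Normal_Form.DL_Rank"
begin

definition skew_rank_var :: "nat \<Rightarrow> nat \<Rightarrow> 'a::field mat set" where
  "skew_rank_var r k = {A. A \<in> carrier_mat k k \<and> transpose_mat A = - A
      \<and> (\<forall>i<k. A $$ (i,i) = 0) \<and> vec_space.rank k A \<le> r}"

definition upper_left_block :: "nat \<Rightarrow> 'a mat \<Rightarrow> 'a mat" where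
  "upper_left_block m1 A = mat m1 m1 (\<lambda>(i,j). A $$ (i,j))"

definition lower_right_block :: "nat \<Rightarrow> nat \<Rightarrow> 'a mat \<Rightarrow> 'a mat" where
  "lower_right_block m1 m2 A = mat m2 m2 (\<lambda>(i,j). A $$ (m1 + i, m1 + j))"

end

theory Submission
  imports Defs
begin

text \<open>Over any field, an alternating matrix of rank at most \<open>r\<close> is a sum of \<open>r div 2\<close>
  elementary alternating matrices \<open>u v\<^sup>T - v u\<^sup>T\<close>: if \<open>B s t = c \<noteq> 0\<close>, subtracting the
  elementary matrix built from the columns \<open>s\<close> and \<open>t\<close> of \<open>B\<close> (scaled by \<open>1/c\<close>) kills these
  two columns and lowers the rank by two. Rank is handled through factorizations \<open>B = F G\<close>
  with inner dimension at most \<open>r\<close>, taken from a minimal set of spanning columns.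
  Conversely every such sum is alternating of rank at most \<open>r\<close>. The diagonal blocks of such a
  sum are the sums of the restricted vectors, and sums for the two blocks are the diagonal blocks
  of the sum of the concatenated vectors.\<close>

definition alternating :: "nat \<Rightarrow> (nat \<Rightarrow> nat \<Rightarrow> 'a::ab_group_add) \<Rightarrow> bool" where
  "alternating n B \<longleftrightarrow> (\<forall>i<n. B i i = 0) \<and> (\<forall>i<n. \<forall>j<n. B j i = - B i j)"

definition wedge_sum ::
    "nat \<Rightarrow> (nat \<Rightarrow> nat \<Rightarrow> 'a) \<Rightarrow> (nat \<Rightarrow> nat \<Rightarrow> 'a) \<Rightarrow> nat \<Rightarrow> nat \<Rightarrow> 'a::comm_ring"
  where "wedge_sum p u v i j = (\<Sum>q<p. u q i * v q j - v q i * u q j)"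

definition wedge_mat ::
    "nat \<Rightarrow> nat \<Rightarrow> (nat \<Rightarrow> nat \<Rightarrow> 'a) \<Rightarrow> (nat \<Rightarrow> nat \<Rightarrow> 'a) \<Rightarrow> 'a::comm_ring mat"
  where "wedge_mat k p u v = mat k k (\<lambda>(i,j). wedge_sum p u v i j)"

lemma alternating_diag: "alternating n B \<Longrightarrow> i < n \<Longrightarrow> B i i = 0"
  unfolding alternating_def by blast

lemma alternating_skew: "alternating n B \<Longrightarrow> i < n \<Longrightarrow> j < n \<Longrightarrow> B j i = - B i j"
  unfolding alternating_def by blast

lemma alternating_cong:
  "(\<And>i j. i < n \<Longrightarrow> j < n \<Longrightarrow> B i j = B' i j) \<Longrightarrow> alternating n B \<longleftrightarrow> alternating n B'"
  by (simp add: alternating_def)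

lemma alternating_diff_wedge:
  fixes B :: "nat \<Rightarrow> nat \<Rightarrow> 'a::comm_ring"
  assumes "alternating n B"
  shows "alternating n (\<lambda>i j. B i j - (f i * g j - g i * f j))"
  unfolding alternating_def
proof (intro conjI allI impI)
  show "B i i - (f i * g i - g i * f i) = 0" if "i < n" for i
    using alternating_diag[OF assms that] by (simp add: mult.commute)
  show "B j i - (f j * g i - g j * f i) = - (B i j - (f i * g j - g i * f j))"
    if "i < n" "j < n" for i j
    using alternating_skew[OF assms that] by (simp add: algebra_simps)
qed

lemma wedge_sum_alternating: "alternating n (wedge_sum p u v)"
  by (simp add: alternating_def wedge_sum_def sum_negf[symmetric] mult.commute)

lemma wedge_sum_Suc_upd:
  "wedge_sum (Suc p) (u(p := f)) (v(p := g)) i j = wedge_sum p u v i j + (f i * g j - g i * f j)"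
  by (simp add: wedge_sum_def)

lemma rank_le_card_sum_products:
  fixes F :: "nat \<Rightarrow> 'b \<Rightarrow> 'a::field" and G :: "'b \<Rightarrow> nat \<Rightarrow> 'a"
  assumes "finite L" and "A \<in> carrier_mat n nc"
    and "\<And>i j. i < n \<Longrightarrow> j < nc \<Longrightarrow> A $$ (i,j) = (\<Sum>l\<in>L. F i l * G l j)"
  shows "vec_space.rank n A \<le> card L"
  using assms
proof (induction L arbitrary: A rule: finite_induct)
  case empty
  then have "A = 0\<^sub>m n nc" by (intro eq_matI) auto
  then show ?case by (simp add: vec_space.rank_0I)
next
  case (insert k L)
  define A1 where "A1 = mat n nc (\<lambda>(i,j). \<Sum>l\<in>L. F i l * G l j)"
  define A2 where "A2 = mat n nc (\<lambda>(i,j). F i k * G k j)"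
  have carrier: "A1 \<in> carrier_mat n nc" "A2 \<in> carrier_mat n nc" by (auto simp: A1_def A2_def)
  have "A = A1 + A2" using insert by (intro eq_matI) (auto simp: A1_def A2_def add.commute)
  then have "vec_space.rank n A \<le> vec_space.rank n A1 + vec_space.rank n A2"
    using vec_space.rank_subadditive[OF carrier] by simp
  moreover have "vec_space.rank n A1 \<le> card L"
    using insert.IH[OF carrier(1)] by (simp add: A1_def)
  moreover have "vec_space.rank n A2 \<le> 1"
    by (rule vec_space.rank_le_1_product_entries[OF carrier(2), of "\<lambda>i. F i k" "\<lambda>j. G k j"])
      (auto simp: A2_def)
  ultimately show ?case using insert.hyps by simp
qed

lemma rank_wedge_mat_le: "vec_space.rank k (wedge_mat k p u v) \<le> 2 * p"
proof -
  define F where "F i = case_sum (\<lambda>q. u q i) (\<lambda>q. - v q i)" for i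
  define G where "G = case_sum v u"
  have "wedge_sum p u v i j = (\<Sum>l\<in>{..<p} <+> {..<p}. F i l * G l j)" for i j
    by (simp add: wedge_sum_def F_def G_def sum.Plus sum_subtractf sum_negf)
  then have "vec_space.rank k (wedge_mat k p u v) \<le> card ({..<p} <+> {..<p})"
    unfolding wedge_mat_def by (intro rank_le_card_sum_products) auto
  then show ?thesis by (simp add: card_Plus)
qed

lemma sum_products_remove_kernel_index:
  fixes F :: "nat \<Rightarrow> 'b \<Rightarrow> 'a::field"
  assumes L: "finite L" and k: "k \<in> L" "x k \<noteq> 0"
    and kernel: "\<And>i. i < n \<Longrightarrow> (\<Sum>l\<in>L. F i l * x l) = 0"
    and B: "\<And>i j. i < n \<Longrightarrow> j < nc \<Longrightarrow> B i j = (\<Sum>l\<in>L. F i l * G l j)"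
  shows "\<exists>G'. \<forall>i<n. \<forall>j<nc. B i j = (\<Sum>l\<in>L-{k}. F i l * G' l j)"
proof (intro exI allI impI)
  fix i j assume ij: "i < n" "j < nc"
  have "(\<Sum>l\<in>L-{k}. F i l * (G l j - x l / x k * G k j))
      = (\<Sum>l\<in>L. F i l * (G l j - x l / x k * G k j))"
    using sum.remove[OF L k(1), of "\<lambda>l. F i l * (G l j - x l / x k * G k j)"] k(2) by simp
  also have "\<dots> = (\<Sum>l\<in>L. F i l * G l j) - G k j / x k * (\<Sum>l\<in>L. F i l * x l)"
    by (simp add: sum_subtractf sum_distrib_left algebra_simps)
  also have "\<dots> = B i j" using B kernel ij by simp
  finally show "B i j = (\<Sum>l\<in>L-{k}. F i l * (G l j - x l / x k * G k j))" by simp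
qed

text \<open>The functionals \<open>p\<close> and \<open>q\<close> witness that the kernel vectors \<open>x\<close> and \<open>y\<close> are
  linearly independent.\<close>

lemma sum_products_remove_two_kernel_indices:
  fixes F :: "nat \<Rightarrow> 'b \<Rightarrow> 'a::field"
  assumes L: "finite L"
    and kernel: "\<And>i. i < n \<Longrightarrow> (\<Sum>l\<in>L. F i l * x l) = 0"
      "\<And>i. i < n \<Longrightarrow> (\<Sum>l\<in>L. F i l * y l) = 0"
    and indep: "(\<Sum>l\<in>L. p l * x l) \<noteq> 0" "(\<Sum>l\<in>L. q l * x l) = 0" "(\<Sum>l\<in>L. q l * y l) \<noteq> 0"
    and B: "\<And>i j. i < n \<Longrightarrow> j < nc \<Longrightarrow> B i j = (\<Sum>l\<in>L. F i l * G l j)"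
  obtains L' G' where "L' \<subseteq> L" "card L' + 2 = card L"
    "\<And>i j. i < n \<Longrightarrow> j < nc \<Longrightarrow> B i j = (\<Sum>l\<in>L'. F i l * G' l j)"
proof -
  obtain k where "k \<in> L" "p k * x k \<noteq> 0"
    by (rule sum.not_neutral_contains_not_neutral[OF indep(1)])
  then have k: "k \<in> L" "x k \<noteq> 0" by simp_all
  obtain G1 where G1: "\<forall>i<n. \<forall>j<nc. B i j = (\<Sum>l\<in>L-{k}. F i l * G1 l j)"
    using sum_products_remove_kernel_index[of L k x n F nc B G, OF L k kernel(1) B] by blast
  define y' where "y' l = y l - y k / x k * x l" for l
  have restrict: "(\<Sum>l\<in>L-{k}. f l * y' l) = (\<Sum>l\<in>L. f l * y l) - y k / x k * (\<Sum>l\<in>L. f l * x l)"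
    for f
  proof -
    have "(\<Sum>l\<in>L-{k}. f l * y' l) = (\<Sum>l\<in>L. f l * y' l)"
      using sum.remove[OF L k(1), of "\<lambda>l. f l * y' l"] k(2) by (simp add: y'_def)
    then show ?thesis by (simp add: y'_def sum_subtractf sum_distrib_left algebra_simps)
  qed
  have "(\<Sum>l\<in>L-{k}. q l * y' l) \<noteq> 0" using restrict indep(2,3) by simp
  then obtain k' where "k' \<in> L - {k}" "q k' * y' k' \<noteq> 0"
    by (rule sum.not_neutral_contains_not_neutral)
  then have k': "k' \<in> L - {k}" "y' k' \<noteq> 0" by simp_all
  have kernel': "(\<Sum>l\<in>L-{k}. F i l * y' l) = 0" if "i < n" for i
    using restrict kernel that by simp
  obtain G2 where "\<forall>i<n. \<forall>j<nc. B i j = (\<Sum>l\<in>L-{k}-{k'}. F i l * G2 l j)"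
    using sum_products_remove_kernel_index[of "L-{k}" k' y' n F nc B G1] L k' kernel' G1 by blast
  moreover have "card (L-{k}-{k'}) + 2 = card L"
    using card.remove[OF L k(1)] card.remove[of "L-{k}" k'] L k'(1) by simp
  ultimately show thesis by (intro that[of "L-{k}-{k'}" G2]) auto
qed

text \<open>If \<open>B s t = c \<noteq> 0\<close>, then \<open>B' = B - (f g\<^sup>T - g f\<^sup>T)\<close> with \<open>f = B(-,s) / c\<close> and
  \<open>g = B(-,t)\<close> arises from \<open>B\<close> by row operations and has vanishing columns \<open>s\<close> and \<open>t\<close>;
  the rows \<open>s\<close> and \<open>t\<close> of the factor \<open>F\<close> show that the corresponding two kernel vectors
  of the new factor are independent.\<close>

lemma alternating_split_off_wedge:
  fixes B :: "nat \<Rightarrow> nat \<Rightarrow> 'a::field" and F :: "nat \<Rightarrow> 'b \<Rightarrow> 'a"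
  assumes alt: "alternating n B" and L: "finite L"
    and B: "\<And>i j. i < n \<Longrightarrow> j < n \<Longrightarrow> B i j = (\<Sum>l\<in>L. F i l * G l j)"
    and st: "s < n" "t < n" "B s t \<noteq> 0"
  obtains B' L' F' G' f g where "alternating n B'" "L' \<subseteq> L" "card L' + 2 = card L"
    "\<And>i j. i < n \<Longrightarrow> j < n \<Longrightarrow> B' i j = (\<Sum>l\<in>L'. F' i l * G' l j)"
    "\<And>i j. i < n \<Longrightarrow> j < n \<Longrightarrow> B i j = B' i j + (f i * g j - g i * f j)"
proof -
  define c where "c = B s t"
  have c: "c \<noteq> 0" using st by (simp add: c_def)
  define f where "f i = B i s / c" for i
  define g where "g i = B i t" for i
  define B' where "B' i j = B i j - (f i * g j - g i * f j)" for i j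
  define F' where "F' i l = F i l + f i * F t l - g i / c * F s l" for i l
  have skew: "B j i = - B i j" if "i < n" "j < n" for i j
    using alternating_skew[OF alt that] .
  have diag: "B i i = 0" if "i < n" for i
    using alternating_diag[OF alt that] .
  have alt': "alternating n B'"
    unfolding B'_def by (rule alternating_diff_wedge[OF alt])
  have B': "B' i j = (\<Sum>l\<in>L. F' i l * G l j)" if ij: "i < n" "j < n" for i j
  proof -
    have "(\<Sum>l\<in>L. F' i l * G l j) = (\<Sum>l\<in>L. F i l * G l j) + f i * (\<Sum>l\<in>L. F t l * G l j)
        - g i / c * (\<Sum>l\<in>L. F s l * G l j)"
      by (simp add: F'_def sum.distrib sum_subtractf sum_distrib_left algebra_simps)
    also have "\<dots> = B i j + f i * B t j - g i / c * B s j" using B ij st by simp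
    also have "\<dots> = B' i j"
      using skew[of j t] skew[of j s] ij st c by (simp add: B'_def f_def g_def c_def field_simps)
    finally show ?thesis by simp
  qed
  have "B' i s = 0" "B' i t = 0" for i
    using diag[OF st(1)] diag[OF st(2)] skew[OF st(1,2)] c
    by (simp_all add: B'_def f_def g_def c_def field_simps)
  then have kernel: "(\<Sum>l\<in>L. F' i l * G l s) = 0" "(\<Sum>l\<in>L. F' i l * G l t) = 0"
    if "i < n" for i
    using B'[OF that st(1)] B'[OF that st(2)] by simp_all
  have "B t s \<noteq> 0" "B s s = 0" using st diag skew[OF st(1,2)] by simp_all
  then have indep: "(\<Sum>l\<in>L. F t l * G l s) \<noteq> 0" "(\<Sum>l\<in>L. F s l * G l s) = 0"
    "(\<Sum>l\<in>L. F s l * G l t) \<noteq> 0"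
    using B[of t s] B[of s s] B[of s t] st by simp_all
  obtain L' G' where "L' \<subseteq> L" "card L' + 2 = card L"
    "\<And>i j. i < n \<Longrightarrow> j < n \<Longrightarrow> B' i j = (\<Sum>l\<in>L'. F' i l * G' l j)"
    using sum_products_remove_two_kernel_indices[where F = F' and x = "\<lambda>l. G l s"
        and y = "\<lambda>l. G l t" and p = "F t" and q = "F s" and B = B' and nc = n and G = G and L = L
        and n = n, OF L kernel indep B'] by blast
  moreover have "B i j = B' i j + (f i * g j - g i * f j)" for i j by (simp add: B'_def)
  ultimately show thesis using that[OF alt'] by blast
qed

lemma alternating_sum_products_eq_wedge_sum:
  fixes B :: "nat \<Rightarrow> nat \<Rightarrow> 'a::field" and F :: "nat \<Rightarrow> 'b \<Rightarrow> 'a"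
  assumes "alternating n B" "finite L" "card L \<le> r"
    and "\<And>i j. i < n \<Longrightarrow> j < n \<Longrightarrow> B i j = (\<Sum>l\<in>L. F i l * G l j)"
  shows "\<exists>u v. \<forall>i<n. \<forall>j<n. B i j = wedge_sum (r div 2) u v i j"
  using assms
proof (induction r arbitrary: B L F G rule: less_induct)
  case (less r)
  show ?case
  proof (cases "\<exists>s<n. \<exists>t<n. B s t \<noteq> 0")
    case False
    then have "\<forall>i<n. \<forall>j<n. B i j = wedge_sum (r div 2) (\<lambda>_ _. 0) (\<lambda>_ _. 0) i j"
      by (simp add: wedge_sum_def)
    then show ?thesis by blast
  next
    case True
    then obtain s t where st: "s < n" "t < n" "B s t \<noteq> 0" by blast
    obtain B' L' F' G' f g where split: "alternating n B'" "L' \<subseteq> L" "card L' + 2 = card L"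
      "\<And>i j. i < n \<Longrightarrow> j < n \<Longrightarrow> B' i j = (\<Sum>l\<in>L'. F' i l * G' l j)"
      "\<And>i j. i < n \<Longrightarrow> j < n \<Longrightarrow> B i j = B' i j + (f i * g j - g i * f j)"
      using alternating_split_off_wedge[of n B L F G s t, OF less.prems(1,2,4) st] by blast
    have "finite L'" using split(2) less.prems(2) by (rule finite_subset)
    moreover have r: "2 \<le> r" "card L' \<le> r - 2" using split(3) less.prems(3) by simp_all
    ultimately obtain u v where uv: "\<forall>i<n. \<forall>j<n. B' i j = wedge_sum ((r - 2) div 2) u v i j"
      using less.IH[of "r - 2" B' L' F' G'] split(1,4) by auto
    have "r div 2 = Suc ((r - 2) div 2)" using r(1) by (simp add: le_div_geq)
    then have "\<forall>i<n. \<forall>j<n.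
        B i j = wedge_sum (r div 2) (u((r - 2) div 2 := f)) (v((r - 2) div 2 := g)) i j"
      using uv split(5) by (simp add: wedge_sum_Suc_upd)
    then show ?thesis by blast
  qed
qed

lemma inj_on_col_if_cols_independent:
  fixes A :: "'a::field mat"
  assumes A: "A \<in> carrier_mat n nc" and L: "L \<subseteq> {..<nc}"
    and indep: "\<And>x k. k \<in> L \<Longrightarrow> (\<And>i. i < n \<Longrightarrow> (\<Sum>l\<in>L. A $$ (i,l) * x l) = 0) \<Longrightarrow> x k = 0"
  shows "inj_on (col A) L"
proof (rule inj_onI, rule ccontr)
  fix l1 l2 assume l: "l1 \<in> L" "l2 \<in> L" "col A l1 = col A l2" "l1 \<noteq> l2"
  define x :: "nat \<Rightarrow> 'a" where "x l = of_bool (l = l1) - of_bool (l = l2)" for l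
  have finL: "finite L" using L finite_subset by blast
  have "(\<Sum>l\<in>L. A $$ (i,l) * x l) = 0" if i: "i < n" for i
  proof -
    have "(\<Sum>l\<in>L. A $$ (i,l) * x l) = A $$ (i,l1) - A $$ (i,l2)"
      using finL l(1,2) by (simp add: x_def right_diff_distrib sum_subtractf)
    also have "\<dots> = col A l1 $ i - col A l2 $ i"
      using A L l(1,2) i by (auto simp: subset_iff)
    finally show ?thesis using l(3) by simp
  qed
  then have "x l1 = 0" by (rule indep[OF l(1)])
  then show False using l(4) by (simp add: x_def)
qed

lemma card_le_rank_if_cols_independent:
  fixes A :: "'a::field mat"
  assumes A: "A \<in> carrier_mat n nc" and L: "L \<subseteq> {..<nc}"
    and indep: "\<And>x k. k \<in> L \<Longrightarrow> (\<And>i. i < n \<Longrightarrow> (\<Sum>l\<in>L. A $$ (i,l) * x l) = 0) \<Longrightarrow> x k = 0"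
  shows "card L \<le> vec_space.rank n A"
proof -
  interpret V: vec_space "TYPE('a)" n .
  have finL: "finite L" using L finite_subset by blast
  have inj: "inj_on (col A) L" using A L indep by (rule inj_on_col_if_cols_independent)
  have cols: "col A ` L \<subseteq> carrier_vec n" using A by auto
  have "V.lin_indpt (col A ` L)"
  proof
    assume "V.lin_dep (col A ` L)"
    then obtain a w where lc: "V.lincomb a (col A ` L) = 0\<^sub>v n" and w: "w \<in> col A ` L" "a w \<noteq> 0"
      using V.finite_lin_dep[of "col A ` L"] finL cols by auto
    then obtain k where k: "k \<in> L" "w = col A k" by blast
    have "(\<Sum>l\<in>L. A $$ (i,l) * a (col A l)) = 0" if i: "i < n" for i
    proof -
      have "(\<Sum>l\<in>L. A $$ (i,l) * a (col A l)) = (\<Sum>v\<in>col A ` L. a v * v $ i)"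
        using A L i by (auto simp: sum.reindex[OF inj] mult.commute intro!: sum.cong)
      also have "\<dots> = V.lincomb a (col A ` L) $ i" using V.lincomb_index[OF i cols] by simp
      finally show ?thesis using lc i by simp
    qed
    then have "a (col A k) = 0" by (rule indep[OF k(1)])
    then show False using w k by simp
  qed
  then have "card (col A ` L) \<le> V.rank A"
    using L A by (intro V.rank_ge_card_indpt[OF A]) (auto simp: cols_def)
  then show ?thesis using card_image[OF inj] by simp
qed

lemma rank_factorization:
  fixes A :: "'a::field mat"
  assumes A: "A \<in> carrier_mat n nc"
  obtains L G where "L \<subseteq> {..<nc}" "card L \<le> vec_space.rank n A"
    "\<And>i j. i < n \<Longrightarrow> j < nc \<Longrightarrow> A $$ (i,j) = (\<Sum>l\<in>L. A $$ (i,l) * G l j)"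
proof -
  define spans where "spans L \<longleftrightarrow> L \<subseteq> {..<nc} \<and>
    (\<exists>G. \<forall>i<n. \<forall>j<nc. A $$ (i,j) = (\<Sum>l\<in>L. A $$ (i,l) * G l j))" for L
  have "spans {..<nc}"
    unfolding spans_def
    by (intro conjI exI[of _ "\<lambda>l j. if l = j then 1 else 0"])
      (simp_all add: if_distrib sum.delta cong: if_cong)
  then obtain L where "spans L" and min: "\<And>L'. spans L' \<Longrightarrow> card L \<le> card L'"
    using ex_has_least_nat[of spans "{..<nc}" card] by blast
  then obtain G where L: "L \<subseteq> {..<nc}" and G: "\<forall>i<n. \<forall>j<nc. A $$ (i,j) = (\<Sum>l\<in>L. A $$ (i,l) * G l j)"
    unfolding spans_def by blast
  have finL: "finite L" using L finite_subset by blast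
  have "card L \<le> vec_space.rank n A"
  proof (rule card_le_rank_if_cols_independent[OF A L], rule ccontr)
    fix x k assume k: "k \<in> L" "x k \<noteq> 0" and kernel: "\<And>i. i < n \<Longrightarrow> (\<Sum>l\<in>L. A $$ (i,l) * x l) = 0"
    have "\<exists>G'. \<forall>i<n. \<forall>j<nc. A $$ (i,j) = (\<Sum>l\<in>L-{k}. A $$ (i,l) * G' l j)"
      using G by (intro sum_products_remove_kernel_index[where F = "\<lambda>i l. A $$ (i,l)" and x = x
          and B = "\<lambda>i j. A $$ (i,j)" and G = G and L = L and k = k and n = n and nc = nc,
          OF finL k kernel]) auto
    then have "spans (L - {k})" using L by (auto simp: spans_def)
    then show False using min[of "L - {k}"] card_Diff1_less[OF finL k(1)] by simp
  qed
  then show thesis using that L G by blast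
qed

lemma skew_rank_var_iff:
  "A \<in> skew_rank_var r k \<longleftrightarrow>
    A \<in> carrier_mat k k \<and> alternating k (\<lambda>i j. A $$ (i,j)) \<and> vec_space.rank k A \<le> r"
proof (cases "A \<in> carrier_mat k k")
  case True
  have "transpose_mat A = - A \<longleftrightarrow> (\<forall>i<k. \<forall>j<k. A $$ (j,i) = - A $$ (i,j))"
  proof
    assume skew: "transpose_mat A = - A"
    show "\<forall>i<k. \<forall>j<k. A $$ (j,i) = - A $$ (i,j)"
    proof (intro allI impI)
      fix i j assume "i < k" "j < k"
      then show "A $$ (j,i) = - A $$ (i,j)" using True arg_cong[OF skew, of "\<lambda>M. M $$ (i,j)"] by simp
    qed
  next
    assume skew: "\<forall>i<k. \<forall>j<k. A $$ (j,i) = - A $$ (i,j)"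
    show "transpose_mat A = - A"
    proof (rule eq_matI)
      fix i j assume "i < dim_row (- A)" "j < dim_col (- A)"
      then have "i < k" "j < k" using True by auto
      then show "transpose_mat A $$ (i,j) = (- A) $$ (i,j)" using True skew[rule_format, of i j] by simp
    qed (use True in auto)
  qed
  then show ?thesis using True by (simp add: skew_rank_var_def alternating_def conj_ac)
qed (simp add: skew_rank_var_def)

lemma skew_rank_var_eq_wedge_mats:
  "skew_rank_var r k = {wedge_mat k (r div 2) u v | u v. True}"
proof (rule Set.set_eqI, rule iffI)
  fix A :: "'a mat" assume "A \<in> skew_rank_var r k"
  then have A: "A \<in> carrier_mat k k" "alternating k (\<lambda>i j. A $$ (i,j))" "vec_space.rank k A \<le> r"
    by (simp_all add: skew_rank_var_iff)
  obtain L G where L: "L \<subseteq> {..<k}" "card L \<le> vec_space.rank k A"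
    and G: "\<And>i j. i < k \<Longrightarrow> j < k \<Longrightarrow> A $$ (i,j) = (\<Sum>l\<in>L. A $$ (i,l) * G l j)"
    using rank_factorization[OF A(1)] by blast
  have finL: "finite L" and cardL: "card L \<le> r" using L A(3) finite_subset by auto
  obtain u v where "\<forall>i<k. \<forall>j<k. A $$ (i,j) = wedge_sum (r div 2) u v i j"
    using alternating_sum_products_eq_wedge_sum[where B = "\<lambda>i j. A $$ (i,j)" and F = "\<lambda>i l. A $$ (i,l)"
        and G = G and L = L and n = k and r = r, OF A(2) finL cardL G] by blast
  then have "A = wedge_mat k (r div 2) u v" using A(1) by (intro eq_matI) (auto simp: wedge_mat_def)
  then show "A \<in> {wedge_mat k (r div 2) u v | u v. True}" by blast
next
  fix A :: "'a mat" assume "A \<in> {wedge_mat k (r div 2) u v | u v. True}"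
  then obtain u v where A: "A = wedge_mat k (r div 2) u v" by blast
  have "alternating k (\<lambda>i j. A $$ (i,j))"
    using alternating_cong[of k "\<lambda>i j. A $$ (i,j)" "wedge_sum (r div 2) u v"] wedge_sum_alternating
    by (simp add: A wedge_mat_def)
  moreover have "vec_space.rank k A \<le> r"
    using rank_wedge_mat_le[of k "r div 2" u v] by (simp add: A)
  ultimately show "A \<in> skew_rank_var r k" by (simp add: skew_rank_var_iff A wedge_mat_def)
qed

lemma wedge_mat_cong:
  assumes "\<And>q i. i < k \<Longrightarrow> u q i = u' q i" "\<And>q i. i < k \<Longrightarrow> v q i = v' q i"
  shows "wedge_mat k p u v = wedge_mat k p u' v'"
  using assms by (auto simp: wedge_mat_def wedge_sum_def intro!: cong_mat sum.cong)

lemma upper_left_block_wedge_mat: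
  "m1 \<le> m \<Longrightarrow> upper_left_block m1 (wedge_mat m p u v) = wedge_mat m1 p u v"
  by (auto simp: upper_left_block_def wedge_mat_def intro!: cong_mat)

lemma lower_right_block_wedge_mat:
  "m1 + m2 \<le> m \<Longrightarrow> lower_right_block m1 m2 (wedge_mat m p u v)
    = wedge_mat m2 p (\<lambda>q i. u q (m1 + i)) (\<lambda>q i. v q (m1 + i))"
  by (auto simp: lower_right_block_def wedge_mat_def wedge_sum_def intro!: cong_mat)

theorem lemma4p4:
  fixes m m1 m2 r :: nat
  assumes "even r" and "m = m1 + m2"
  shows "(\<lambda>A :: 'a :: alg_closed_field mat. (upper_left_block m1 A, lower_right_block m1 m2 A))
           ` skew_rank_var r m = skew_rank_var r m1 \<times> skew_rank_var r m2"
proof -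
  let ?blocks = "\<lambda>A :: 'a mat. (upper_left_block m1 A, lower_right_block m1 m2 A)"
  let ?W = "\<lambda>k u v. wedge_mat k (r div 2) u v :: 'a mat"
  let ?glue = "\<lambda>u1 u2 q i. if i < m1 then u1 q i else u2 q (i - m1)"
  have upper: "upper_left_block m1 (?W m u v) = ?W m1 u v" for u v
    using assms(2) by (simp add: upper_left_block_wedge_mat)
  have lower: "lower_right_block m1 m2 (?W m u v) = ?W m2 (\<lambda>q i. u q (m1 + i)) (\<lambda>q i. v q (m1 + i))"
    for u v using assms(2) by (simp add: lower_right_block_wedge_mat)
  have glued: "?blocks (?W m (?glue u1 u2) (?glue v1 v2)) = (?W m1 u1 v1, ?W m2 u2 v2)"
    for u1 v1 u2 v2 unfolding upper lower by (auto intro: wedge_mat_cong)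
  show ?thesis
  proof (intro equalityI subsetI)
    fix P assume "P \<in> ?blocks ` skew_rank_var r m"
    then show "P \<in> skew_rank_var r m1 \<times> skew_rank_var r m2"
      unfolding skew_rank_var_eq_wedge_mats by (auto simp: upper lower intro!: exI)
  next
    fix P :: "'a mat \<times> 'a mat" assume "P \<in> skew_rank_var r m1 \<times> skew_rank_var r m2"
    then obtain u1 v1 u2 v2 where "P = ?blocks (?W m (?glue u1 u2) (?glue v1 v2))"
      unfolding skew_rank_var_eq_wedge_mats glued by blast
    then show "P \<in> ?blocks ` skew_rank_var r m"
      unfolding skew_rank_var_eq_wedge_mats by blast
  qed
qed

end
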